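(* Let $1<\gamma<2$ and let $A,N,\omega,V$ be real functions of $x$ on an interval, with $A>0$, $N\ge0$, $\omega>0$, $|V|<1$, solving the system $$\frac{A'}{A}=1-A+\frac{2\omega(1+(\gamma-1)V^2)}{1-V^2},\qquad \frac{N'}{N}=-2+A-(2-\gamma)\omega,\qquad \frac{A'}{A}=-\frac{2\gamma NV\omega}{1-V^2},$$ $$(1+NV)\frac{\omega'}{\omega}+\frac{\gamma(N+V)V'}{1-V^2}=\frac{3(2-\gamma)}{2}NV-\frac{2+\gamma}{2}ANV+(2-\gamma)NV\omega,$$ $$(\gamma-1)(N+V)\frac{\omega'}{\omega}+\frac{\gamma(1+NV)V'}{1-V^2}=(2-\gamma)(\gamma-1)N\omega+\frac{7\gamma-6}{2}N+\frac{2-3\gamma}{2}AN,$$ where $'=d/dx$. Then $A$ is monotonically non-decreasing on every subinterval on which $A<1$.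
   Context: This is the system of ordinary differential equations for continuously self-similar spherically symmetric solutions of Einstein's equations with a perfect fluid of equation of state $p=(\gamma-1)\rho$, in the self-similar variable $x=\ln(-r/t)$, where $A=a^2$ (metric function), $N=\alpha/(ae^x)$ (rescaled lapse), $\omega=4\pi r^2a^2\rho$ (rescaled density), and $V$ is the fluid 3-velocity. *)

theory Defs
  imports "HOL-Analysis.Analysis"
begin

end

theory Submission
  imports Defs
begin

text \<open>The first field equation expresses \<open>A'/A\<close> as \<open>1 - A\<close> plus the matter term
  \<open>2\<omega>(1 + (\<gamma>-1)V\<^sup>2)/(1 - V\<^sup>2)\<close>, which is nonnegative for a fluid with positive density and
  subluminal velocity. Hence \<open>A' \<ge> 0\<close> wherever \<open>A < 1\<close>, and the mean value theorem gives
  monotonicity.\<close>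

lemma mono_on_if_has_real_derivative_nonneg:
  fixes f f' :: "real \<Rightarrow> real"
  assumes S: "is_interval S"
    and deriv: "\<And>x. x \<in> S \<Longrightarrow> (f has_real_derivative f' x) (at x within S)"
    and nonneg: "\<And>x. x \<in> S \<Longrightarrow> f' x \<ge> 0"
  shows "mono_on S f"
proof (rule mono_onI)
  fix r s assume rs: "r \<in> S" "s \<in> S" "r \<le> s"
  have sub: "{r..s} \<subseteq> S"
    using S rs by (metis atLeastAtMost_iff is_interval_1 subsetI)
  have "\<exists>x\<in>{r..s}. f s - f r = f' x * (s - r)"
  proof (rule mvt_very_simple[OF rs(3)])
    fix x assume "r \<le> x" "x \<le> s"
    then have "x \<in> S"
      using sub by auto
    then have "(f has_real_derivative f' x) (at x within {r..s})"
      using deriv sub has_field_derivative_subset by blast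
    then show "(f has_derivative (\<lambda>h. f' x * h)) (at x within {r..s})"
      by (simp add: has_field_derivative_def)
  qed
  then obtain x where "x \<in> {r..s}" "f s - f r = f' x * (s - r)"
    by blast
  moreover have "f' x \<ge> 0"
    using nonneg sub \<open>x \<in> {r..s}\<close> by blast
  ultimately show "f r \<le> f s"
    using rs(3) by (metis diff_ge_0_iff_ge mult_nonneg_nonneg)
qed

lemma fluid_matter_term_nonneg:
  fixes \<gamma> \<omega> v :: real
  assumes "1 \<le> \<gamma>" "0 \<le> \<omega>" "\<bar>v\<bar> < 1"
  shows "0 \<le> 2 * \<omega> * (1 + (\<gamma> - 1) * v\<^sup>2) / (1 - v\<^sup>2)"
proof -
  have "v\<^sup>2 < 1"
    using assms(3) by (simp add: abs_square_less_1)
  moreover have "0 \<le> 1 + (\<gamma> - 1) * v\<^sup>2"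
    using assms(1) by simp
  ultimately show ?thesis
    using assms(2) by simp
qed

theorem lemma5:
  fixes \<gamma> :: real and I :: "real set"
    and A N \<omega> V A' N' \<omega>' V' :: "real \<Rightarrow> real"
  assumes gam: "1 < \<gamma>" "\<gamma> < 2"
    and I: "is_interval I"
    and dA: "\<And>x. x \<in> I \<Longrightarrow> (A has_real_derivative A' x) (at x within I)"
    and dN: "\<And>x. x \<in> I \<Longrightarrow> (N has_real_derivative N' x) (at x within I)"
    and dw: "\<And>x. x \<in> I \<Longrightarrow> (\<omega> has_real_derivative \<omega>' x) (at x within I)"
    and dV: "\<And>x. x \<in> I \<Longrightarrow> (V has_real_derivative V' x) (at x within I)"
    and pos: "\<And>x. x \<in> I \<Longrightarrow> A x > 0 \<and> N x \<ge> 0 \<and> \<omega> x > 0 \<and> \<bar>V x\<bar> < 1"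
    and e1: "\<And>x. x \<in> I \<Longrightarrow>
      A' x / A x = 1 - A x + 2 * \<omega> x * (1 + (\<gamma> - 1) * (V x)\<^sup>2) / (1 - (V x)\<^sup>2)"
    and e2: "\<And>x. x \<in> I \<Longrightarrow> N' x = N x * (-2 + A x - (2 - \<gamma>) * \<omega> x)"
    and e3: "\<And>x. x \<in> I \<Longrightarrow>
      A' x / A x = - (2 * \<gamma> * N x * V x * \<omega> x) / (1 - (V x)\<^sup>2)"
    and e4: "\<And>x. x \<in> I \<Longrightarrow>
      (1 + N x * V x) * (\<omega>' x / \<omega> x) + \<gamma> * (N x + V x) * V' x / (1 - (V x)\<^sup>2)
      = 3 * (2 - \<gamma>) / 2 * N x * V x - (2 + \<gamma>) / 2 * A x * N x * V x
        + (2 - \<gamma>) * N x * V x * \<omega> x"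
    and e5: "\<And>x. x \<in> I \<Longrightarrow>
      (\<gamma> - 1) * (N x + V x) * (\<omega>' x / \<omega> x) + \<gamma> * (1 + N x * V x) * V' x / (1 - (V x)\<^sup>2)
      = (2 - \<gamma>) * (\<gamma> - 1) * N x * \<omega> x + (7 * \<gamma> - 6) / 2 * N x
        + (2 - 3 * \<gamma>) / 2 * A x * N x"
  shows "\<forall>J. J \<subseteq> I \<and> is_interval J \<and> (\<forall>x\<in>J. A x < 1) \<longrightarrow> mono_on J A"
proof (intro allI impI)
  fix J assume J: "J \<subseteq> I \<and> is_interval J \<and> (\<forall>x\<in>J. A x < 1)"
  show "mono_on J A"
  proof (rule mono_on_if_has_real_derivative_nonneg)
    fix x assume "x \<in> J"
    then have x: "x \<in> I" "A x < 1"
      using J by auto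
    show "(A has_real_derivative A' x) (at x within J)"
      using dA[OF x(1)] J has_field_derivative_subset by blast
    have "0 \<le> 2 * \<omega> x * (1 + (\<gamma> - 1) * (V x)\<^sup>2) / (1 - (V x)\<^sup>2)"
      using fluid_matter_term_nonneg gam pos[OF x(1)] by auto
    then have "0 \<le> A' x / A x"
      using e1[OF x(1)] x(2) by linarith
    then show "0 \<le> A' x"
      using pos[OF x(1)] by (simp add: zero_le_divide_iff)
  qed (use J in blast)
qed

end
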